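(* Let $A,B\in\mathbb{R}^{m\times n}$ and $b\in\mathbb{R}^m$ with $\operatorname{rank}(B) = m$ and $m<n$, and let $1\le p\le\infty$. If $B^\dagger b\leq0$, $B^\dagger A\geq0$ and $\|B^\dagger A\|_p<1$, then the equation $Ax-B|x|=b$ has at least one nonnegative solution.
   Context: $B^\dagger$ is the Moore–Penrose inverse; $|x|$ is the entrywise absolute value; vector/matrix inequalities are entrywise; $\|\cdot\|_p$ on matrices is the operator norm induced by the vector $p$-norm. *)

theory Defs
  imports "HOL-Analysis.Analysis"
begin

definition is_moore_penrose :: "real^'n^'m \<Rightarrow> real^'m^'n \<Rightarrow> bool" where
  "is_moore_penrose B X \<longleftrightarrow>
     B ** X ** B = B \<and> X ** B ** X = X \<and>
     transpose (B ** X) = B ** X \<and> transpose (X ** B) = X ** B"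

definition moore_penrose :: "real^'n^'m \<Rightarrow> real^'m^'n" where
  "moore_penrose B = (THE X. is_moore_penrose B X)"

definition vec_pnorm :: "ereal \<Rightarrow> real^'n \<Rightarrow> real" where
  "vec_pnorm p x =
     (if p = \<infinity> then Max (range (\<lambda>i. \<bar>x $ i\<bar>))
      else (\<Sum>i\<in>UNIV. \<bar>x $ i\<bar> powr real_of_ereal p) powr (1 / real_of_ereal p))"

definition mat_pnorm :: "ereal \<Rightarrow> real^'n^'m \<Rightarrow> real" where
  "mat_pnorm p M = (SUP x\<in>{x. x \<noteq> 0}. vec_pnorm p (M *v x) / vec_pnorm p x)"

definition vec_abs :: "real^'n \<Rightarrow> real^'n" where
  "vec_abs x = (\<chi> i. \<bar>x $ i\<bar>)"

end

theory Submission imports Defs begin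

text \<open>Full row rank makes the Moore--Penrose inverse \<open>X = B\<^sup>\<dagger>\<close> a right inverse of \<open>B\<close>.
  For \<open>x \<ge> 0\<close> the equation reads \<open>(A - B) x = b\<close>, and multiplying a fixed point
  \<open>x = C x + e\<close> with \<open>C = X A\<close>, \<open>e = - X b\<close> by \<open>B\<close> gives exactly this. As \<open>\<parallel>C\<parallel>\<^sub>p < 1\<close>,
  the Neumann series \<open>\<Sum>\<^sub>k C\<^sup>k e\<close> converges to such a fixed point, and it is nonnegative
  because \<open>C \<ge> 0\<close> and \<open>e \<ge> 0\<close>.\<close>

lemma surj_generalized_inverse_is_right_inverse:
  fixes B :: "real^'n^'m" and X :: "real^'m^'n"
  assumes surj: "surj ((*v) B)" and gen_inv: "B ** X ** B = B"
  shows "B ** X = mat 1"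
proof -
  have "(B ** X) *v y = y" for y
  proof -
    obtain z where y: "y = B *v z" using surj by (metis surjD)
    have "(B ** X) *v y = (B ** X ** B) *v z" by (simp add: y matrix_vector_mul_assoc)
    with gen_inv y show ?thesis by simp
  qed
  then show ?thesis by (simp add: matrix_eq)
qed

lemma is_moore_penrose_unique:
  fixes B :: "real^'n^'m" and X Y :: "real^'m^'n"
  assumes surj: "surj ((*v) B)" and X: "is_moore_penrose B X" and Y: "is_moore_penrose B Y"
  shows "X = Y"
proof -
  have BX: "B ** X = mat 1"
    using surj_generalized_inverse_is_right_inverse[OF surj] X
    unfolding is_moore_penrose_def by auto
  have XB_sym: "transpose (X ** B) = X ** B" and YB_sym: "transpose (Y ** B) = Y ** B"
    using X Y unfolding is_moore_penrose_def by auto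
  have "X ** B = transpose ((X ** B) ** (Y ** B))"
    using XB_sym Y unfolding is_moore_penrose_def by (metis matrix_mul_assoc)
  also have "\<dots> = (Y ** B) ** (X ** B)"
    by (subst matrix_transpose_mul) (simp only: XB_sym YB_sym)
  also have "\<dots> = Y ** (B ** X) ** B" by (simp add: matrix_mul_assoc)
  also have "\<dots> = Y ** B" by (simp add: BX)
  finally have XB: "X ** B = Y ** B" .
  have "X = (X ** B) ** X" by (metis BX matrix_mul_assoc matrix_mul_rid)
  also have "\<dots> = Y" by (metis XB BX matrix_mul_assoc matrix_mul_rid)
  finally show ?thesis .
qed

lemma surj_gram_matrix_left_invertible:
  fixes B :: "real^'n^'m"
  assumes surj: "surj ((*v) B)"
  shows "\<exists>G. G ** (B ** transpose B) = mat 1"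
proof -
  have "y = 0" if "(B ** transpose B) *v y = 0" for y
  proof -
    have "inner (transpose B *v y) (transpose B *v y) = inner y ((B ** transpose B) *v y)"
      by (metis dot_lmul_matrix matrix_vector_mul_assoc transpose_matrix_vector)
    then have Bty: "y v* B = 0" using that by simp
    obtain z where "y = B *v z" using surj by (metis surjD)
    then have "inner y y = inner (y v* B) z" by (simp add: dot_lmul_matrix)
    with Bty show "y = 0" by simp
  qed
  then show ?thesis using matrix_left_invertible_ker by blast
qed

lemma surj_is_moore_penrose_exists:
  fixes B :: "real^'n^'m"
  assumes surj: "surj ((*v) B)"
  shows "\<exists>X. is_moore_penrose B X"
proof -
  obtain G where "G ** (B ** transpose B) = mat 1"
    using surj_gram_matrix_left_invertible[OF surj] by blast
  then have BG: "(B ** transpose B) ** G = mat 1" using matrix_left_right_inverse by blast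
  have "transpose G ** (B ** transpose B) = mat 1"
    using arg_cong[OF BG, of transpose] by (simp add: matrix_transpose_mul matrix_mul_assoc)
  then have G_sym: "transpose G = G"
    by (metis BG matrix_mul_assoc matrix_mul_lid matrix_mul_rid)
  define X where "X = transpose B ** G"
  have BX: "B ** X = mat 1" using BG by (simp add: X_def matrix_mul_assoc)
  have "transpose (X ** B) = X ** B"
    by (simp add: X_def matrix_transpose_mul G_sym matrix_mul_assoc)
  moreover have "X ** B ** X = X" by (metis BX matrix_mul_assoc matrix_mul_rid)
  ultimately have "is_moore_penrose B X" by (simp add: is_moore_penrose_def BX)
  then show ?thesis ..
qed

lemma full_row_rank_moore_penrose_right_inverse:
  fixes B :: "real^'n^'m"
  assumes "rank B = CARD('m)"
  shows "B ** moore_penrose B = mat 1"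
proof -
  have surj: "surj ((*v) B)" using assms full_rank_surjective by blast
  obtain X where X: "is_moore_penrose B X" using surj_is_moore_penrose_exists[OF surj] ..
  have "\<exists>!X. is_moore_penrose B X" using X is_moore_penrose_unique[OF surj] by blast
  then have "is_moore_penrose B (moore_penrose B)"
    unfolding moore_penrose_def by (rule theI')
  then show ?thesis
    using surj_generalized_inverse_is_right_inverse[OF surj] by (simp add: is_moore_penrose_def)
qed

lemma abs_component_le_vec_pnorm:
  fixes v :: "real^'n"
  assumes "1 \<le> p"
  shows "\<bar>v $ i\<bar> \<le> vec_pnorm p v"
proof (cases "p = \<infinity>")
  case True
  then show ?thesis by (simp add: vec_pnorm_def)
next
  case False
  define q where "q = real_of_ereal p"
  have q: "1 \<le> q" using assms False unfolding q_def by (cases p) auto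
  have "\<bar>v $ i\<bar> = (\<bar>v $ i\<bar> powr q) powr (1/q)" using q by (simp add: powr_powr)
  also have "\<dots> \<le> (\<Sum>j\<in>UNIV. \<bar>v $ j\<bar> powr q) powr (1/q)"
    by (rule powr_mono2) (use q in \<open>auto intro: member_le_sum\<close>)
  finally show ?thesis using False by (simp add: vec_pnorm_def q_def)
qed

lemma vec_pnorm_nonneg: "1 \<le> p \<Longrightarrow> 0 \<le> vec_pnorm p v"
  using abs_component_le_vec_pnorm[of p v] abs_ge_zero order_trans by blast

lemma vec_pnorm_zero: "1 \<le> p \<Longrightarrow> vec_pnorm p 0 = 0"
  by (cases p) (auto simp: vec_pnorm_def)

lemma vec_pnorm_pos:
  fixes v :: "real^'n"
  assumes "1 \<le> p" and "v \<noteq> 0"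
  shows "0 < vec_pnorm p v"
proof -
  obtain i where "v $ i \<noteq> 0" using \<open>v \<noteq> 0\<close> by (auto simp: vec_eq_iff)
  then show ?thesis using abs_component_le_vec_pnorm[OF \<open>1 \<le> p\<close>, of v i] by simp
qed

lemma norm_le_card_vec_pnorm:
  fixes v :: "real^'n"
  assumes "1 \<le> p"
  shows "norm v \<le> real CARD('n) * vec_pnorm p v"
proof -
  have "norm v \<le> (\<Sum>i\<in>UNIV. \<bar>v $ i\<bar>)" by (rule norm_le_l1_cart)
  also have "\<dots> \<le> (\<Sum>i\<in>(UNIV::'n set). vec_pnorm p v)"
    by (intro sum_mono abs_component_le_vec_pnorm assms)
  finally show ?thesis by simp
qed

lemma vec_pnorm_le_card_norm:
  fixes v :: "real^'n"
  assumes "1 \<le> p"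
  shows "vec_pnorm p v \<le> real CARD('n) * norm v"
proof (cases "p = \<infinity>")
  case True
  have "Max (range (\<lambda>i. \<bar>v $ i\<bar>)) \<le> norm v" by (auto simp: component_le_norm_cart)
  also have "\<dots> \<le> real CARD('n) * norm v" by (simp add: mult_le_cancel_right1)
  finally show ?thesis using True by (simp add: vec_pnorm_def)
next
  case False
  define q where "q = real_of_ereal p"
  have q: "1 \<le> q" using assms False unfolding q_def by (cases p) auto
  have "(\<Sum>j\<in>UNIV. \<bar>v $ j\<bar> powr q) \<le> (\<Sum>j\<in>(UNIV::'n set). norm v powr q)"
    by (intro sum_mono powr_mono2) (use q in \<open>auto simp: component_le_norm_cart\<close>)
  then have "(\<Sum>j\<in>UNIV. \<bar>v $ j\<bar> powr q) powr (1/q) \<le> (real CARD('n) * norm v powr q) powr (1/q)"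
    by (intro powr_mono2) (use q in \<open>auto intro: sum_nonneg\<close>)
  also have "\<dots> = real CARD('n) powr (1/q) * norm v"
    using q by (simp add: powr_mult powr_powr)
  also have "\<dots> \<le> real CARD('n) * norm v"
    using powr_mono[of "1/q" 1 "real CARD('n)"] q by (intro mult_right_mono) auto
  finally show ?thesis using False by (simp add: vec_pnorm_def q_def)
qed

lemma bdd_above_vec_pnorm_quotients:
  fixes M :: "real^'n^'m"
  assumes "1 \<le> p"
  shows "bdd_above ((\<lambda>x. vec_pnorm p (M *v x) / vec_pnorm p x) ` {x. x \<noteq> 0})"
proof -
  obtain K where K: "\<And>x. norm (M *v x) \<le> norm x * K" and "K > 0"
    using bounded_linear.pos_bounded[OF matrix_vector_mul_bounded_linear] by blast
  have "vec_pnorm p (M *v x) / vec_pnorm p x \<le> real CARD('m) * K * real CARD('n)"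
    if "x \<noteq> 0" for x
  proof -
    have "vec_pnorm p (M *v x) \<le> real CARD('m) * norm (M *v x)"
      by (rule vec_pnorm_le_card_norm[OF assms])
    also have "\<dots> \<le> real CARD('m) * K * norm x"
      using K[of x] by (simp add: mult_left_mono mult.commute mult.left_commute)
    also have "\<dots> \<le> real CARD('m) * K * (real CARD('n) * vec_pnorm p x)"
      using norm_le_card_vec_pnorm[OF assms, of x] \<open>K > 0\<close> by (intro mult_left_mono) auto
    finally show ?thesis
      using vec_pnorm_pos[OF assms that] by (simp add: divide_le_eq algebra_simps)
  qed
  then show ?thesis by (intro bdd_aboveI2) auto
qed

lemma vec_pnorm_matrix_vector_le:
  fixes M :: "real^'n^'m"
  assumes "1 \<le> p"
  shows "vec_pnorm p (M *v x) \<le> mat_pnorm p M * vec_pnorm p x"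
proof (cases "x = 0")
  case True
  then show ?thesis by (simp add: vec_pnorm_zero[OF assms])
next
  case False
  have "vec_pnorm p (M *v x) / vec_pnorm p x \<le> mat_pnorm p M"
    unfolding mat_pnorm_def
    by (rule cSUP_upper[OF _ bdd_above_vec_pnorm_quotients[OF assms]]) (use False in simp)
  then show ?thesis using vec_pnorm_pos[OF assms False] by (simp add: divide_le_eq)
qed

lemma mat_pnorm_nonneg:
  fixes M :: "real^'n^'m"
  assumes "1 \<le> p"
  shows "0 \<le> mat_pnorm p M"
proof -
  have "0 \<le> mat_pnorm p M * vec_pnorm p (1::real^'n)"
    using vec_pnorm_nonneg[OF assms, of "M *v 1"] vec_pnorm_matrix_vector_le[OF assms, of M 1]
    by linarith
  moreover have "0 < vec_pnorm p (1::real^'n)"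
    by (rule vec_pnorm_pos[OF assms]) simp
  ultimately show ?thesis by (simp add: zero_le_mult_iff)
qed

lemma vec_pnorm_matrix_iterate_le:
  fixes C :: "real^'n^'n"
  assumes "1 \<le> p"
  shows "vec_pnorm p (((*v) C ^^ k) e) \<le> mat_pnorm p C ^ k * vec_pnorm p e"
proof (induction k)
  case 0
  then show ?case by simp
next
  case (Suc k)
  have "vec_pnorm p (((*v) C ^^ Suc k) e) \<le> mat_pnorm p C * vec_pnorm p (((*v) C ^^ k) e)"
    using vec_pnorm_matrix_vector_le[OF assms] by simp
  also have "\<dots> \<le> mat_pnorm p C * (mat_pnorm p C ^ k * vec_pnorm p e)"
    using Suc mat_pnorm_nonneg[OF assms] by (rule mult_left_mono)
  finally show ?case by simp
qed

lemma summable_matrix_iterates: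
  fixes C :: "real^'n^'n"
  assumes "1 \<le> p" and "mat_pnorm p C < 1"
  shows "summable (\<lambda>k. ((*v) C ^^ k) e)"
proof (rule summable_comparison_test')
  show "summable (\<lambda>k. real CARD('n) * (mat_pnorm p C ^ k * vec_pnorm p e))"
    using assms(2) mat_pnorm_nonneg[OF assms(1), of C]
    by (intro summable_mult summable_mult2 summable_geometric) simp
  show "norm (((*v) C ^^ k) e) \<le> real CARD('n) * (mat_pnorm p C ^ k * vec_pnorm p e)" for k
    using norm_le_card_vec_pnorm[OF assms(1)] vec_pnorm_matrix_iterate_le[OF assms(1)]
    by (meson mult_left_mono of_nat_0_le_iff order_trans)
qed

lemma neumann_series_fixpoint:
  fixes T :: "'a::real_normed_vector \<Rightarrow> 'a"
  assumes "bounded_linear T" and "summable (\<lambda>k. (T ^^ k) e)"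
  shows "T (\<Sum>k. (T ^^ k) e) + e = (\<Sum>k. (T ^^ k) e)"
proof -
  have "T (\<Sum>k. (T ^^ k) e) = (\<Sum>k. (T ^^ Suc k) e)"
    using bounded_linear.suminf[OF assms] by simp
  also have "\<dots> = (\<Sum>k. (T ^^ k) e) - e"
    using suminf_split_head[OF assms(2)] by simp
  finally show ?thesis by simp
qed

lemma nonneg_matrix_iterate_nonneg:
  fixes C :: "real^'n^'n"
  assumes "\<forall>i j. 0 \<le> C $ i $ j" and "\<forall>i. 0 \<le> e $ i"
  shows "0 \<le> ((*v) C ^^ k) e $ i"
  using assms(2)
  by (induction k arbitrary: i) (simp_all add: matrix_vector_mult_def sum_nonneg assms(1))

lemma nonneg_fixpoint_if_mat_pnorm_less_one:
  fixes C :: "real^'n^'n"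
  assumes "1 \<le> p" and "mat_pnorm p C < 1"
    and "\<forall>i j. 0 \<le> C $ i $ j" and "\<forall>i. 0 \<le> e $ i"
  shows "\<exists>x. (\<forall>i. 0 \<le> x $ i) \<and> C *v x + e = x"
proof (intro exI conjI allI)
  let ?x = "\<Sum>k. ((*v) C ^^ k) e"
  have summable: "summable (\<lambda>k. ((*v) C ^^ k) e)"
    using assms(1,2) by (rule summable_matrix_iterates)
  show "C *v ?x + e = ?x"
    using matrix_vector_mul_bounded_linear summable by (rule neumann_series_fixpoint)
  fix i
  have "?x $ i = (\<Sum>k. ((*v) C ^^ k) e $ i)"
    using bounded_linear.suminf[OF bounded_linear_vec_nth summable] .
  also have "0 \<le> \<dots>"
    using bounded_linear.summable[OF bounded_linear_vec_nth summable] assms(3,4)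
    by (intro suminf_nonneg nonneg_matrix_iterate_nonneg)
  finally show "0 \<le> ?x $ i" .
qed

theorem corollary3p5:
  fixes A B :: "real^'n^'m" and b :: "real^'m" and p :: ereal
  assumes "rank B = CARD('m)" and "CARD('m) < CARD('n)"
    and "1 \<le> p"
    and "\<forall>i. (moore_penrose B *v b) $ i \<le> 0"
    and "\<forall>i j. (moore_penrose B ** A) $ i $ j \<ge> 0"
    and "mat_pnorm p (moore_penrose B ** A) < 1"
  shows "\<exists>x. (\<forall>i. x $ i \<ge> 0) \<and> A *v x - B *v vec_abs x = b"
proof -
  define C where "C = moore_penrose B ** A"
  define e where "e = - (moore_penrose B *v b)"
  obtain x where x_nonneg: "\<forall>i. 0 \<le> x $ i" and fixpoint: "C *v x + e = x"
    using nonneg_fixpoint_if_mat_pnorm_less_one[of p C e] assms(3-6) by (auto simp: C_def e_def)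
  have right_inv: "B ** moore_penrose B = mat 1"
    using assms(1) by (rule full_row_rank_moore_penrose_right_inverse)
  have Be: "B *v e = - b"
    using linear_neg[OF matrix_vector_mul_linear, of B "moore_penrose B *v b"]
    by (simp add: e_def matrix_vector_mul_assoc right_inv)
  have "B *v x = B *v (C *v x) + B *v e"
    by (metis fixpoint matrix_vector_right_distrib)
  also have "\<dots> = A *v x - b"
    by (simp add: Be C_def matrix_vector_mul_assoc matrix_mul_assoc right_inv)
  finally have "A *v x - B *v x = b" by simp
  moreover have "vec_abs x = x" using x_nonneg by (simp add: vec_abs_def vec_eq_iff)
  ultimately show ?thesis using x_nonneg by metis
qed

end
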